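(* Let $P$ be a distribution on the finite alphabet $\mathcal X$ and let $C_1,C_2,\dots,C_N$ be i.i.d. according to $P$. The probability that $C^N=(C_1,\dots,C_N)$ does not satisfy the prefix condition (with respect to $P$) tends to zero as $N\to\infty$.
   Context: A sequence $c^N\in\mathcal X^N$ satisfies the prefix condition with respect to $P$ if for every prefix length $i$ with $N/\ln N< i\le N$, the empirical distribution $\hat P_{c^i}$ of $c^i=(c_1,\dots,c_i)$ satisfies $\|P-\hat P_{c^i}\|_1\le 1/\ln N$. *)

theory Defs
  imports "HOL-Probability.Probability"
begin

text \<open>A sequence c^N is represented by c :: nat => 'a, with c j (j < N) the (j+1)-th letter.
  The empirical distribution of the prefix c^i = (c 0, ..., c (i-1)).\<close>
definition emp_dist :: "(nat \<Rightarrow> 'a) \<Rightarrow> nat \<Rightarrow> 'a \<Rightarrow> real" where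
  "emp_dist c i x = real (card {j. j < i \<and> c j = x}) / real i"

definition l1_dist :: "'a::finite pmf \<Rightarrow> ('a \<Rightarrow> real) \<Rightarrow> real" where
  "l1_dist P Q = (\<Sum>x\<in>UNIV. \<bar>pmf P x - Q x\<bar>)"

definition prefix_cond :: "'a::finite pmf \<Rightarrow> nat \<Rightarrow> (nat \<Rightarrow> 'a) \<Rightarrow> bool" where
  "prefix_cond P N c \<longleftrightarrow>
     (\<forall>i. real N / ln (real N) < real i \<and> i \<le> N \<longrightarrow> l1_dist P (emp_dist c i) \<le> 1 / ln (real N))"

end

theory Submission imports Defs "HOL-Real_Asymp.Real_Asymp" begin

text \<open>For a fixed prefix length i and letter x the count of x in c^i is binomially distributed,
  so Hoeffding's inequality bounds the probability of a deviation of the empirical frequency by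
  exp (-2 i \<epsilon>^2). An l1-deviation larger than 1/ln N forces some letter to deviate by
  1/(|X| ln N), and a union bound over the at most N prefix lengths i > N/ln N and the |X| letters
  gives a failure probability of at most 2 |X| N exp (-2 N / (|X|^2 (ln N)^3)), which tends to 0.\<close>

lemma map_pmf_eq_eq_bernoulli_pmf: "map_pmf (\<lambda>y. y = x) P = bernoulli_pmf (pmf P x)"
proof (rule pmf_eqI)
  fix b :: bool
  have "measure_pmf.prob P {y. y \<noteq> x} = 1 - pmf P x"
    using measure_pmf.prob_compl[of "{x}" P] by (simp add: set_diff_eq measure_pmf_single)
  then show "pmf (map_pmf (\<lambda>y. y = x) P) b = pmf (bernoulli_pmf (pmf P x)) b"
    by (cases b) (simp_all add: pmf_map vimage_def measure_pmf_single pmf_le_1)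
qed

lemma map_pmf_count_prefix_Pi_pmf:
  assumes "i \<le> N"
  shows "map_pmf (\<lambda>c. card {j. j < i \<and> c j = x}) (Pi_pmf {..<N} d (\<lambda>_. P))
       = binomial_pmf i (pmf P x)"
proof -
  have prefix: "Pi_pmf {..<i} d (\<lambda>_. P)
      = map_pmf (\<lambda>f j. if j \<in> {..<i} then f j else d) (Pi_pmf {..<N} d (\<lambda>_. P))"
    using assms by (intro Pi_pmf_subset) auto
  have "map_pmf (\<lambda>c. card {j. j < i \<and> c j = x}) (Pi_pmf {..<N} d (\<lambda>_. P))
      = map_pmf (\<lambda>c. card {j. j < i \<and> c j = x}) (Pi_pmf {..<i} d (\<lambda>_. P))"
    unfolding prefix map_pmf_comp by (intro map_pmf_cong refl arg_cong[where f=card]) auto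
  also have "\<dots> = map_pmf (\<lambda>f. card {j\<in>{..<i}. f j})
                    (map_pmf (\<lambda>c. (\<lambda>y. y = x) \<circ> c) (Pi_pmf {..<i} d (\<lambda>_. P)))"
    unfolding map_pmf_comp by (simp add: o_def)
  also have "map_pmf (\<lambda>c. (\<lambda>y. y = x) \<circ> c) (Pi_pmf {..<i} d (\<lambda>_. P))
      = Pi_pmf {..<i} (d = x) (\<lambda>_. map_pmf (\<lambda>y. y = x) P)"
    by (rule Pi_pmf_map[symmetric]) auto
  also have "\<dots> = Pi_pmf {..<i} (d = x) (\<lambda>_. bernoulli_pmf (pmf P x))"
    by (simp add: map_pmf_eq_eq_bernoulli_pmf)
  also have "map_pmf (\<lambda>f. card {j\<in>{..<i}. f j}) \<dots> = binomial_pmf i (pmf P x)"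
    by (rule binomial_pmf_altdef'[symmetric]) (auto simp: pmf_le_1)
  finally show ?thesis .
qed

lemma prob_emp_dist_deviation_le:
  assumes "0 < i" "i \<le> N" "\<epsilon> \<ge> 0"
  shows "measure_pmf.prob (Pi_pmf {..<N} d (\<lambda>_. P)) {c. \<bar>emp_dist c i x - pmf P x\<bar> \<ge> \<epsilon>}
     \<le> 2 * exp (-2 * real i * \<epsilon>\<^sup>2)"
proof -
  have "measure_pmf.prob (Pi_pmf {..<N} d (\<lambda>_. P)) {c. \<bar>emp_dist c i x - pmf P x\<bar> \<ge> \<epsilon>}
      = measure_pmf.prob (map_pmf (\<lambda>c. card {j. j < i \<and> c j = x}) (Pi_pmf {..<N} d (\<lambda>_. P)))
          {k. \<bar>real k / real i - pmf P x\<bar> \<ge> \<epsilon>}"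
    by (simp add: measure_map_pmf vimage_def emp_dist_def)
  also have "\<dots> = measure_pmf.prob (binomial_pmf i (pmf P x)) {k. \<bar>k / i - pmf P x\<bar> \<ge> \<epsilon>}"
    using assms by (simp add: map_pmf_count_prefix_Pi_pmf)
  also have "\<dots> \<le> 2 * exp (-2 * real i * \<epsilon>\<^sup>2)"
    using binomial_distribution.prob_abs_ge'[of "pmf P x" i \<epsilon>] assms
    by (simp add: binomial_distribution_def pmf_le_1)
  finally show ?thesis .
qed

lemma l1_dist_gt_imp_letter_deviation:
  fixes P :: "'a::finite pmf"
  assumes "e < l1_dist P Q"
  shows "\<exists>x. e / real CARD('a) \<le> \<bar>Q x - pmf P x\<bar>"
proof (rule ccontr)
  assume "\<not> ?thesis"
  then have "\<And>x. \<bar>pmf P x - Q x\<bar> \<le> e / real CARD('a)"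
    by (metis abs_minus_commute linorder_not_le less_imp_le)
  then have "l1_dist P Q \<le> (\<Sum>x\<in>(UNIV::'a set). e / real CARD('a))"
    unfolding l1_dist_def by (intro sum_mono)
  then show False using assms by simp
qed

lemma prob_l1_deviation_of_long_prefix_le:
  fixes P :: "'a::finite pmf"
  assumes "t \<ge> 0" "e \<ge> 0"
  shows "measure_pmf.prob (Pi_pmf {..<N} d (\<lambda>_. P))
           {c. \<exists>i. t < real i \<and> i \<le> N \<and> e < l1_dist P (emp_dist c i)}
         \<le> 2 * real CARD('a) * real N * exp (-2 * t * (e / real CARD('a))\<^sup>2)"
proof -
  define M where "M = Pi_pmf {..<N} d (\<lambda>_. P)"
  define \<epsilon> where "\<epsilon> = e / real CARD('a)"
  define I where "I = {i. t < real i \<and> i \<le> N}"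
  define A where "A i x = {c. \<epsilon> \<le> \<bar>emp_dist c i x - pmf P x\<bar>}" for i x
  have I: "I \<subseteq> {1..N}"
    using assms(1) by (auto simp: I_def intro: Nat.gr0I)
  then have "finite I" by (rule finite_subset) simp
  have "{c. \<exists>i. t < real i \<and> i \<le> N \<and> e < l1_dist P (emp_dist c i)} \<subseteq> (\<Union>i\<in>I. \<Union>x. A i x)"
    by (auto simp: I_def A_def \<epsilon>_def dest!: l1_dist_gt_imp_letter_deviation)
  then have "measure_pmf.prob M {c. \<exists>i. t < real i \<and> i \<le> N \<and> e < l1_dist P (emp_dist c i)}
      \<le> measure_pmf.prob M (\<Union>i\<in>I. \<Union>x. A i x)"
    by (intro measure_pmf.finite_measure_mono) auto
  also have "\<dots> \<le> (\<Sum>i\<in>I. \<Sum>x\<in>UNIV. measure_pmf.prob M (A i x))"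
    by (intro order.trans[OF measure_pmf.finite_measure_subadditive_finite] sum_mono
        measure_pmf.finite_measure_subadditive_finite \<open>finite I\<close>) auto
  also have "\<dots> \<le> (\<Sum>i\<in>I. \<Sum>x\<in>(UNIV::'a set). 2 * exp (-2 * t * \<epsilon>\<^sup>2))"
  proof (intro sum_mono)
    fix i x assume "i \<in> I"
    then have "0 < i" "i \<le> N" "t < real i" using I by (auto simp: I_def)
    then have "measure_pmf.prob M (A i x) \<le> 2 * exp (-2 * real i * \<epsilon>\<^sup>2)"
      unfolding M_def A_def using assms by (intro prob_emp_dist_deviation_le) (auto simp: \<epsilon>_def)
    also have "\<dots> \<le> 2 * exp (-2 * t * \<epsilon>\<^sup>2)"
      using \<open>t < real i\<close> by (simp add: mult_right_mono)
    finally show "measure_pmf.prob M (A i x) \<le> 2 * exp (-2 * t * \<epsilon>\<^sup>2)" .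
  qed
  also have "\<dots> = real (card I) * real CARD('a) * (2 * exp (-2 * t * \<epsilon>\<^sup>2))"
    by simp
  also have "\<dots> \<le> real N * real CARD('a) * (2 * exp (-2 * t * \<epsilon>\<^sup>2))"
    using card_mono[OF _ I] by (intro mult_right_mono) auto
  finally show ?thesis unfolding M_def \<epsilon>_def by (simp add: mult_ac)
qed

theorem lemma4:
  fixes P :: "'a::finite pmf"
  shows "(\<lambda>N. measure_pmf.prob (Pi_pmf {..<N} undefined (\<lambda>_. P)) {c. \<not> prefix_cond P N c})
           \<longlonglongrightarrow> 0"
proof (rule tendsto_sandwich[OF _ _ tendsto_const])
  define K where "K = real CARD('a)"
  have "K > 0" by (simp add: K_def)
  show "(\<lambda>N. 2 * K * real N * exp (-2 * (real N / ln N) * (1 / ln N / K)\<^sup>2)) \<longlonglongrightarrow> 0"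
    using \<open>K > 0\<close> by real_asymp
  show "\<forall>\<^sub>F N in sequentially. measure_pmf.prob (Pi_pmf {..<N} undefined (\<lambda>_. P))
        {c. \<not> prefix_cond P N c}
      \<le> 2 * K * real N * exp (-2 * (real N / ln N) * (1 / ln N / K)\<^sup>2)"
    using eventually_ge_at_top[of 1]
  proof eventually_elim
    case (elim N)
    then have "0 \<le> ln (real N)" by simp
    moreover have "{c. \<not> prefix_cond P N c}
        = {c. \<exists>i. real N / ln N < real i \<and> i \<le> N \<and> 1 / ln N < l1_dist P (emp_dist c i)}"
      by (auto simp: prefix_cond_def)
    ultimately show ?case
      using prob_l1_deviation_of_long_prefix_le[where t = "real N / ln N" and e = "1 / ln N"]
      by (simp add: K_def)
  qed
qed simp

end
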